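(* Let $G$ be a graph with a linear order $<$ on $V(G)$ satisfying the X-property, and let $s<t$ be vertices with $\operatorname{dist}(s,t)<\infty$. If a shortest $s$-$t$ path $P$ contains two edges $\{v,v'\}$ and $\{w,w'\}$ with $v<w<v'<w'$, then $P$ also contains the edge $\{v,w'\}$; moreover, this is the only pair of crossing edges in $P$, and every vertex $x$ of $P$ satisfies $v\le x\le w'$.
   Context: The X-property: for all vertices $p<q<r<s$, if $\{p,r\}\in E(G)$ and $\{q,s\}\in E(G)$ then $\{p,s\}\in E(G)$. $\operatorname{dist}(s,t)$ is the number of edges of a shortest $s$-$t$ path. Two edges $\{a,b\}$ and $\{c,d\}$ with $a<b$, $c<d$ are crossing if $a<c<b<d$ or $c<a<d<b$. *)

theory Defs
  imports Main
begin

definition simple_graph :: "'a set \<Rightarrow> 'a set set \<Rightarrow> bool" where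
  "simple_graph V E \<longleftrightarrow> (\<forall>e\<in>E. \<exists>a b. a \<noteq> b \<and> a \<in> V \<and> b \<in> V \<and> e = {a, b})"

definition X_property :: "'a::linorder set \<Rightarrow> 'a set set \<Rightarrow> bool" where
  "X_property V E \<longleftrightarrow> (\<forall>p\<in>V. \<forall>q\<in>V. \<forall>r\<in>V. \<forall>s\<in>V.
     p < q \<and> q < r \<and> r < s \<and> {p, r} \<in> E \<and> {q, s} \<in> E \<longrightarrow> {p, s} \<in> E)"

definition walk :: "'a set \<Rightarrow> 'a set set \<Rightarrow> 'a list \<Rightarrow> bool" where
  "walk V E P \<longleftrightarrow> P \<noteq> [] \<and> set P \<subseteq> V \<and> (\<forall>i. Suc i < length P \<longrightarrow> {P ! i, P ! Suc i} \<in> E)"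

definition path :: "'a set \<Rightarrow> 'a set set \<Rightarrow> 'a list \<Rightarrow> bool" where
  "path V E P \<longleftrightarrow> walk V E P \<and> distinct P"

definition st_path :: "'a set \<Rightarrow> 'a set set \<Rightarrow> 'a \<Rightarrow> 'a \<Rightarrow> 'a list \<Rightarrow> bool" where
  "st_path V E s t P \<longleftrightarrow> path V E P \<and> hd P = s \<and> last P = t"

definition path_len :: "'a list \<Rightarrow> nat" where
  "path_len P = length P - 1"

text \<open>dist(s,t) < infinity: some s-t path exists.\<close>
definition connected_to :: "'a set \<Rightarrow> 'a set set \<Rightarrow> 'a \<Rightarrow> 'a \<Rightarrow> bool" where
  "connected_to V E s t \<longleftrightarrow> (\<exists>P. st_path V E s t P)"

text \<open>dist(s,t) (meaningful when connected_to holds).\<close>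
definition dist :: "'a set \<Rightarrow> 'a set set \<Rightarrow> 'a \<Rightarrow> 'a \<Rightarrow> nat" where
  "dist V E s t = (LEAST n. \<exists>P. st_path V E s t P \<and> path_len P = n)"

definition shortest_path :: "'a set \<Rightarrow> 'a set set \<Rightarrow> 'a \<Rightarrow> 'a \<Rightarrow> 'a list \<Rightarrow> bool" where
  "shortest_path V E s t P \<longleftrightarrow> st_path V E s t P \<and> path_len P = dist V E s t"

definition path_edges :: "'a list \<Rightarrow> 'a set set" where
  "path_edges P = {{P ! i, P ! Suc i} | i. Suc i < length P}"

definition crossing :: "'a::linorder set \<Rightarrow> 'a set \<Rightarrow> bool" where
  "crossing e f \<longleftrightarrow> (\<exists>a b c d. e = {a, b} \<and> f = {c, d} \<and> a < b \<and> c < d \<and>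
      ((a < c \<and> c < b \<and> b < d) \<or> (c < a \<and> a < d \<and> d < b)))"

end

theory Submission
  imports Defs
begin

(*
  A shortest path is induced: any chord would shortcut it. For crossing edges {p,r}, {q,u} with p < q < r < u it yields the chord
  candidate {p,u}, so p and u are consecutive on P, flanked by r and q. A vertex strictly
  between the endpoints of an edge {lo,hi} of P that is adjacent to a vertex outside [lo,hi]
  would, again by the X-property, be adjacent to lo or hi; so walking away from the edge {p,u}
  the path never leaves [p,u]. Two crossing pairs thus confine P to the same interval, which
  pins down the outer edge and hence the pair itself.
*)

lemma walk_nth_edge: "walk V E P \<Longrightarrow> Suc i < length P \<Longrightarrow> {P ! i, P ! Suc i} \<in> E"
  unfolding walk_def by blast

lemma walk_take: "walk V E P \<Longrightarrow> 0 < n \<Longrightarrow> walk V E (take n P)"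
  unfolding walk_def using set_take_subset[of n P] by auto

lemma walk_drop:
  assumes "walk V E P" "j < length P"
  shows "walk V E (drop j P)"
  unfolding walk_def
proof (intro conjI allI impI)
  show "drop j P \<noteq> []" "set (drop j P) \<subseteq> V"
    using assms set_drop_subset[of j P] unfolding walk_def by auto
  fix i assume "Suc i < length (drop j P)"
  then show "{drop j P ! i, drop j P ! Suc i} \<in> E"
    using walk_nth_edge[OF assms(1), of "j + i"] by simp
qed

lemma walk_append:
  assumes xs: "walk V E xs" and ys: "walk V E ys" and link: "{last xs, hd ys} \<in> E"
  shows "walk V E (xs @ ys)"
  unfolding walk_def
proof (intro conjI allI impI)
  show "xs @ ys \<noteq> []" "set (xs @ ys) \<subseteq> V" using xs ys unfolding walk_def by auto
  fix i assume i: "Suc i < length (xs @ ys)"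
  consider "Suc i < length xs" | "Suc i = length xs" | "length xs \<le> i" by linarith
  then show "{(xs @ ys) ! i, (xs @ ys) ! Suc i} \<in> E"
  proof cases
    case 1
    then show ?thesis using walk_nth_edge[OF xs] by (simp add: nth_append)
  next
    case 2
    then have "xs ! i = last xs" "ys ! 0 = hd ys"
      using xs ys unfolding walk_def by (auto simp: last_conv_nth hd_conv_nth simp flip: 2)
    then show ?thesis using 2 link by (simp add: nth_append)
  next
    case 3
    then have "Suc (i - length xs) < length ys" "Suc i - length xs = Suc (i - length xs)"
      using i by auto
    then show ?thesis using 3 walk_nth_edge[OF ys] by (simp add: nth_append)
  qed
qed

lemma dist_le_path_len: "st_path V E s t Q \<Longrightarrow> dist V E s t \<le> path_len Q"
  unfolding dist_def by (rule Least_le) blast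

definition induced_path :: "'a set \<Rightarrow> 'a set set \<Rightarrow> 'a list \<Rightarrow> bool" where
  "induced_path V E P \<longleftrightarrow> path V E P \<and> (\<forall>i j. Suc i < j \<longrightarrow> j < length P \<longrightarrow> {P ! i, P ! j} \<notin> E)"

lemma induced_path_adjacent:
  assumes "induced_path V E P" "i < length P" "j < length P" "i \<noteq> j" "{P ! i, P ! j} \<in> E"
  shows "j = Suc i \<or> i = Suc j"
proof (rule ccontr)
  assume "\<not> ?thesis"
  with assms(4) have "Suc i < j \<or> Suc j < i" by linarith
  moreover have "{P ! j, P ! i} \<in> E"
    using assms(5) by (simp add: insert_commute)
  ultimately show False
    using assms(1-3,5) unfolding induced_path_def by blast
qed

lemma shortest_path_induced:
  assumes sp: "shortest_path V E s t P"
  shows "induced_path V E P"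
  unfolding induced_path_def
proof (intro conjI allI impI notI)
  show "path V E P" using sp unfolding shortest_path_def st_path_def by simp
  fix i j assume ij: "Suc i < j" and j: "j < length P" and chord: "{P ! i, P ! j} \<in> E"
  define Q where "Q = take (Suc i) P @ drop j P"
  have P: "walk V E P" "distinct P" "hd P = s" "last P = t"
    using sp unfolding shortest_path_def st_path_def path_def by auto
  have "last (take (Suc i) P) = P ! i"
    using ij j by (simp add: take_Suc_conv_app_nth)
  then have "{last (take (Suc i) P), hd (drop j P)} \<in> E"
    using chord j by (simp add: hd_drop_conv_nth)
  then have "walk V E Q"
    unfolding Q_def by (intro walk_append walk_take walk_drop) (use P j in auto)
  moreover have "distinct Q"
    unfolding Q_def using P ij by (simp add: set_take_disj_set_drop_if_distinct)
  moreover have "hd Q = s" "last Q = t"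
    unfolding Q_def using P j by (auto simp: hd_append)
  ultimately have "dist V E s t \<le> path_len Q"
    by (intro dist_le_path_len) (simp add: st_path_def path_def)
  moreover have "path_len Q < path_len P"
    unfolding Q_def path_len_def using ij j by simp
  ultimately show False
    using sp unfolding shortest_path_def by simp
qed

lemma X_propertyD:
  assumes "X_property V E" "p \<in> V" "q \<in> V" "r \<in> V" "u \<in> V"
    and "p < q" "q < r" "r < u" "{p, r} \<in> E" "{q, u} \<in> E"
  shows "{p, u} \<in> E"
  using assms unfolding X_property_def by blast

lemma path_edgesE:
  assumes "{x, y} \<in> path_edges P"
  obtains i j where "i < length P" "j < length P" "P ! i = x" "P ! j = y" "j = Suc i \<or> i = Suc j"
proof -
  obtain i where i: "Suc i < length P" and "{x, y} = {P ! i, P ! Suc i}"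
    using assms unfolding path_edges_def by blast
  then consider "x = P ! i" "y = P ! Suc i" | "x = P ! Suc i" "y = P ! i"
    by (auto simp: doubleton_eq_iff)
  then show thesis
    using that[of i "Suc i"] that[of "Suc i" i] i by cases auto
qed

lemma path_edges_nthI: "Suc a < length P \<Longrightarrow> {P ! a, P ! Suc a} = e \<Longrightarrow> e \<in> path_edges P"
  unfolding path_edges_def by blast

lemma distinct_nth_doubleton_eq:
  assumes "distinct P" "Suc a < length P" "Suc b < length P"
    and "{P ! a, P ! Suc a} = {P ! b, P ! Suc b}"
  shows "a = b"
  using assms by (auto simp: doubleton_eq_iff nth_eq_iff_index_eq)

lemma induced_path_nth_in_vertices: "induced_path V E P \<Longrightarrow> k < length P \<Longrightarrow> P ! k \<in> V"
  unfolding induced_path_def path_def walk_def by auto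

lemma induced_path_edge: "induced_path V E P \<Longrightarrow> Suc i < length P \<Longrightarrow> {P ! i, P ! Suc i} \<in> E"
  unfolding induced_path_def path_def by (rule walk_nth_edge) auto

lemma induced_path_distinct: "induced_path V E P \<Longrightarrow> distinct P"
  unfolding induced_path_def path_def by simp

lemma induced_path_crossing_edges:
  assumes X: "X_property V E" and P: "induced_path V E P"
    and pr: "{p, r} \<in> path_edges P" and qu: "{q, u} \<in> path_edges P"
    and order: "p < q" "q < r" "r < u"
  obtains a where "a + 3 < length P" "{P ! Suc a, P ! Suc (Suc a)} = {p, u}" "{P ! a, P ! (a + 3)} = {q, r}"
proof -
  obtain ip ir where i: "ip < length P" "ir < length P" "P ! ip = p" "P ! ir = r"
    and ipr: "ir = Suc ip \<or> ip = Suc ir"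
    using pr by (rule path_edgesE)
  obtain iq iu where j: "iq < length P" "iu < length P" "P ! iq = q" "P ! iu = u"
    and iqu: "iu = Suc iq \<or> iq = Suc iu"
    using qu by (rule path_edgesE)
  have "{p, r} \<in> E" "{q, u} \<in> E"
    using ipr iqu i j induced_path_edge[OF P] by (auto simp: insert_commute)
  then have "{P ! ip, P ! iu} \<in> E"
    using X_propertyD[OF X] order i j induced_path_nth_in_vertices[OF P] by metis
  moreover have "ip \<noteq> iu" "ir \<noteq> iu" "iq \<noteq> ip"
    using i j order by auto
  ultimately have ipu: "iu = Suc ip \<or> ip = Suc iu"
    using induced_path_adjacent[OF P] i j by blast
  show ?thesis
  proof (cases "iu = Suc ip")
    case True
    with ipr iqu \<open>ir \<noteq> iu\<close> \<open>iq \<noteq> ip\<close> have "ip = Suc ir" "iq = Suc iu" by auto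
    then show thesis
      using that[of ir] True i j by (auto simp: insert_commute numeral_3_eq_3)
  next
    case False
    with ipu ipr iqu \<open>ir \<noteq> iu\<close> \<open>iq \<noteq> ip\<close> have "ip = Suc iu" "iu = Suc iq" "ir = Suc ip" by auto
    then show thesis
      using that[of iq] i j by (auto simp: insert_commute numeral_3_eq_3)
  qed
qed

lemma induced_path_neighbour_inside_edge:
  assumes X: "X_property V E" and P: "induced_path V E P"
    and lh: "lo < hi" and a: "a + 2 < length P" and edge: "{P ! Suc a, P ! Suc (Suc a)} = {lo, hi}"
    and k: "k < length P" and k': "k' < length P" and adj: "{P ! k, P ! k'} \<in> E"
    and inside: "lo < P ! k" "P ! k < hi"
    and far: "k' < a \<or> a + 3 < k'"
  shows "lo < P ! k' \<and> P ! k' < hi"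
proof -
  obtain l h where lh_idx: "{l, h} = {Suc a, Suc (Suc a)}" and l: "P ! l = lo" and h: "P ! h = hi"
    using edge lh by (auto simp: doubleton_eq_iff)
  have lh_len: "l < length P" "h < length P" and lh_far: "l \<noteq> k'" "h \<noteq> k'"
      "l \<noteq> Suc k'" "k' \<noteq> Suc l" "h \<noteq> Suc k'" "k' \<noteq> Suc h"
    using lh_idx a far by (auto simp: doubleton_eq_iff)
  have E_lh: "{lo, hi} \<in> E"
    using induced_path_edge[OF P, of "Suc a"] a edge by simp
  note inV = induced_path_nth_in_vertices[OF P]
  have V_lh: "lo \<in> V" "hi \<in> V"
    using inV lh_len l h by blast+
  have adj': "{P ! k', P ! k} \<in> E"
    using adj by (simp add: insert_commute)
  have "\<not> P ! k' < lo"
  proof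
    assume "P ! k' < lo"
    from X_propertyD[OF X inV[OF k'] V_lh(1) inV[OF k] V_lh(2) this inside adj' E_lh]
    have "{P ! k', P ! h} \<in> E" using h by simp
    then show False
      using induced_path_adjacent[OF P k' lh_len(2)] lh_far by auto
  qed
  moreover have "\<not> hi < P ! k'"
  proof
    assume "hi < P ! k'"
    from X_propertyD[OF X V_lh(1) inV[OF k] V_lh(2) inV[OF k'] inside this E_lh adj]
    have "{P ! l, P ! k'} \<in> E" using l by simp
    then show False
      using induced_path_adjacent[OF P lh_len(1) k'] lh_far by auto
  qed
  moreover have "P ! k' \<noteq> lo" "P ! k' \<noteq> hi"
    using l h lh_len lh_far k' induced_path_distinct[OF P] by (auto simp: nth_eq_iff_index_eq)
  ultimately show ?thesis by auto
qed

lemma induced_path_inside_edge: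
  assumes X: "X_property V E" and P: "induced_path V E P"
    and lh: "lo < hi" and a: "a + 3 < length P" and edge: "{P ! Suc a, P ! Suc (Suc a)} = {lo, hi}"
    and before: "lo < P ! a" "P ! a < hi" and after: "lo < P ! (a + 3)" "P ! (a + 3) < hi"
  shows "set P \<subseteq> {lo..hi}"
proof
  have a2: "a + 2 < length P" using a by simp
  note propagate = induced_path_neighbour_inside_edge[OF X P lh a2 edge]
  have up: "lo < P ! k \<and> P ! k < hi" if "a + 3 \<le> k" "k < length P" for k
    using that
  proof (induction k rule: dec_induct)
    case base then show ?case using after by simp
  next
    case (step n)
    then show ?case
      using propagate[of n "Suc n"] induced_path_edge[OF P, of n] a by simp
  qed
  have down: "lo < P ! k \<and> P ! k < hi" if "k \<le> a" for k
    using that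
  proof (induction k rule: inc_induct)
    case base then show ?case using before by simp
  next
    case (step n)
    then show ?case
      using propagate[of "Suc n" n] induced_path_edge[OF P, of n] a by (simp add: insert_commute)
  qed
  fix x assume "x \<in> set P"
  then obtain k where k: "k < length P" "x = P ! k"
    by (auto simp: in_set_conv_nth)
  consider "k \<le> a" | "k = Suc a \<or> k = Suc (Suc a)" | "a + 3 \<le> k" by linarith
  then show "x \<in> {lo..hi}"
  proof cases
    case 2
    then have "x \<in> {lo, hi}" using edge k by auto
    then show ?thesis using lh by auto
  qed (use up[of k] down[of k] k in auto)
qed

lemma induced_path_crossing_edges_inside:
  assumes X: "X_property V E" and P: "induced_path V E P"
    and "{p, r} \<in> path_edges P" "{q, u} \<in> path_edges P" "p < q" "q < r" "r < u"
  obtains a where "a + 3 < length P" "{P ! Suc a, P ! Suc (Suc a)} = {p, u}"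
    "{P ! a, P ! (a + 3)} = {q, r}" "set P \<subseteq> {p..u}"
proof -
  obtain a where a: "a + 3 < length P" and outer: "{P ! Suc a, P ! Suc (Suc a)} = {p, u}"
    and inner: "{P ! a, P ! (a + 3)} = {q, r}"
    using induced_path_crossing_edges[OF assms] .
  have "p < P ! a" "P ! a < u" "p < P ! (a + 3)" "P ! (a + 3) < u"
    using inner assms(5-7) by (auto simp: doubleton_eq_iff)
  then have "set P \<subseteq> {p..u}"
    using induced_path_inside_edge[OF X P _ a outer] assms(5-7) by simp
  with a outer inner show thesis by (rule that)
qed

lemma induced_path_crossing_unique:
  assumes X: "X_property V E" and P: "induced_path V E P"
    and "{p, r} \<in> path_edges P" "{q, u} \<in> path_edges P" "p < q" "q < r" "r < u"
    and "{p', r'} \<in> path_edges P" "{q', u'} \<in> path_edges P" "p' < q'" "q' < r'" "r' < u'"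
  shows "p' = p \<and> q' = q \<and> r' = r \<and> u' = u"
proof -
  obtain a where a: "a + 3 < length P" and outer: "{P ! Suc a, P ! Suc (Suc a)} = {p, u}"
    and inner: "{P ! a, P ! (a + 3)} = {q, r}" and bounds: "set P \<subseteq> {p..u}"
    using induced_path_crossing_edges_inside[OF X P assms(3-7)] .
  obtain b where b: "b + 3 < length P" and outer': "{P ! Suc b, P ! Suc (Suc b)} = {p', u'}"
    and inner': "{P ! b, P ! (b + 3)} = {q', r'}" and bounds': "set P \<subseteq> {p'..u'}"
    using induced_path_crossing_edges_inside[OF X P assms(8-12)] .
  have "{P ! Suc a, P ! Suc (Suc a)} \<subseteq> set P" "{P ! Suc b, P ! Suc (Suc b)} \<subseteq> set P"
    using a b by auto
  then have "{p, u, p', u'} \<subseteq> set P"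
    using outer outer' by auto
  then have "p \<le> p'" "p' \<le> p" "u' \<le> u" "u \<le> u'"
    using bounds bounds' by auto
  then have "p' = p" "u' = u" by simp_all
  with outer outer' have "a = b"
    using distinct_nth_doubleton_eq[OF induced_path_distinct[OF P], of "Suc a" "Suc b"] a b by simp
  then have "{q, r} = {q', r'}"
    using inner inner' by simp
  then have "q' = q \<and> r' = r"
    using assms(6,11) by (auto simp: doubleton_eq_iff)
  with \<open>p' = p\<close> \<open>u' = u\<close> show ?thesis by simp
qed

lemma crossingE:
  assumes "crossing e f"
  obtains p q r u where "p < q" "q < r" "r < u" "{e, f} = {{p, r}, {q, u}}"
proof -
  obtain a b c d where "e = {a, b}" "f = {c, d}"
    and "(a < c \<and> c < b \<and> b < d) \<or> (c < a \<and> a < d \<and> d < b)"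
    using assms unfolding crossing_def by blast
  then show thesis
    using that[of a c b d] that[of c a d b] by (auto simp: insert_commute)
qed

theorem lemma6:
  fixes V :: "'a::linorder set" and E :: "'a set set" and s t v v' w w' :: 'a and P :: "'a list"
  assumes "simple_graph V E"
    and "X_property V E"
    and "s \<in> V" and "t \<in> V" and "s < t"
    and "connected_to V E s t"
    and "shortest_path V E s t P"
    and "{v, v'} \<in> path_edges P" and "{w, w'} \<in> path_edges P"
    and "v < w" and "w < v'" and "v' < w'"
  shows "{v, w'} \<in> path_edges P
    \<and> (\<forall>e\<in>path_edges P. \<forall>f\<in>path_edges P. crossing e f \<longrightarrow> {e, f} = {{v, v'}, {w, w'}})
    \<and> (\<forall>x\<in>set P. v \<le> x \<and> x \<le> w')"
proof -
  note X = assms(2) and vw = assms(8-12)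
  have P: "induced_path V E P"
    using assms(7) by (rule shortest_path_induced)
  obtain a where a: "a + 3 < length P" and outer: "{P ! Suc a, P ! Suc (Suc a)} = {v, w'}"
    and "{P ! a, P ! (a + 3)} = {w, v'}" and bounds: "set P \<subseteq> {v..w'}"
    by (rule induced_path_crossing_edges_inside[OF X P vw])
  have outer_edge: "{v, w'} \<in> path_edges P"
    using path_edges_nthI[of "Suc a" P] a outer by simp
  have unique: "{e, f} = {{v, v'}, {w, w'}}"
    if "e \<in> path_edges P" "f \<in> path_edges P" "crossing e f" for e f
  proof -
    obtain p q r u where order: "p < q" "q < r" "r < u" and ef: "{e, f} = {{p, r}, {q, u}}"
      using \<open>crossing e f\<close> by (rule crossingE)
    have "{{p, r}, {q, u}} \<subseteq> path_edges P"
      using that(1,2) unfolding ef[symmetric] by simp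
    then have "p = v \<and> q = w \<and> r = v' \<and> u = w'"
      using induced_path_crossing_unique[OF X P vw _ _ order] by simp
    with ef show ?thesis by simp
  qed
  show ?thesis
    using outer_edge bounds unique by (intro conjI ballI impI) auto
qed

end
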